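(* Let $k:\mathbb{R}^D\times\mathbb{R}^D\to\mathbb{R}$ be a translation-invariant positive definite kernel with $k(x,x)=1$ for all $x$ and $0\le k(x,x')\le 1$, and let $0<\rho<1$. Let $X=\{x_1,\dots,x_N\}\subset\mathbb{R}^D$ be a dataset, and let $Z=\{Z_1,\dots,Z_M\}\subseteq X$ be the set of inducing point locations obtained by processing $x_1,\dots,x_N$ sequentially with the Online Inducing Point Selection procedure (defined in the context) with threshold $\rho$, where the first point is always selected. Assume $K_Z$ is invertible. Then $$\|K_X-Q_X\|\le (N-M)\left(1-\frac{\rho^2}{1+M(M-1)\rho}\right),$$ where $\|\cdot\|$ denotes the Frobenius norm.
   Context: Online Inducing Point Selection (OIPS): given a kernel $k$, a threshold $0<\rho<1$ and a current set of inducing point locations $Z=\{Z_1,\dots,Z_M\}\subset\mathbb{R}^D$, when a new sample $x$ arrives one computes $d=\max_{j} k(x,Z_j)$; if $d<\rho$ (or if $Z$ is empty), then $x$ is added to $Z$ (so $M$ increases by one), otherwise $Z$ is left unchanged. Samples are processed one at a time, each exactly once. Notation: for finite sets $A,B$ of points, $K_{AB}$ is the matrix $(k(a,b))_{a\in A,b\in B}$ and $K_A=K_{AA}$; $K_X$ is the $N\times N$ kernel matrix on the dataset and $Q_X=K_{XZ}K_Z^{-1}K_{ZX}$ is the Nyström approximation of $K_X$ using the subset $Z$. *)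

theory Defs
  imports "HOL-Analysis.Analysis" "Jordan_Normal_Form.Matrix"
begin

text \<open>Positive definite kernel (in the machine-learning sense: symmetric and every
  Gram matrix is positive semidefinite).\<close>
definition pd_kernel :: "('a \<Rightarrow> 'a \<Rightarrow> real) \<Rightarrow> bool" where
  "pd_kernel k \<longleftrightarrow> (\<forall>x y. k x y = k y x) \<and>
     (\<forall>(xs :: 'a list) (c :: nat \<Rightarrow> real).
        (\<Sum>i<length xs. \<Sum>j<length xs. c i * c j * k (xs ! i) (xs ! j)) \<ge> 0)"

definition translation_invariant :: "('a::real_vector \<Rightarrow> 'a \<Rightarrow> real) \<Rightarrow> bool" where
  "translation_invariant k \<longleftrightarrow> (\<forall>x y h. k (x + h) (y + h) = k x y)"

definition oips_step :: "('a \<Rightarrow> 'a \<Rightarrow> real) \<Rightarrow> real \<Rightarrow> 'a list \<Rightarrow> 'a \<Rightarrow> 'a list" where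
  "oips_step k \<rho> Z x =
     (if Z = [] \<or> Max (set (map (k x) Z)) < \<rho> then Z @ [x] else Z)"

definition oips :: "('a \<Rightarrow> 'a \<Rightarrow> real) \<Rightarrow> real \<Rightarrow> 'a list \<Rightarrow> 'a list" where
  "oips k \<rho> xs = foldl (oips_step k \<rho>) [] xs"

definition kmat :: "('a \<Rightarrow> 'a \<Rightarrow> real) \<Rightarrow> 'a list \<Rightarrow> 'a list \<Rightarrow> real mat" where
  "kmat k A B = mat (length A) (length B) (\<lambda>(i, j). k (A ! i) (B ! j))"

definition inv_mat :: "real mat \<Rightarrow> real mat" where
  "inv_mat A = (SOME B. inverts_mat A B \<and> inverts_mat B A)"

definition nystrom :: "('a \<Rightarrow> 'a \<Rightarrow> real) \<Rightarrow> 'a list \<Rightarrow> 'a list \<Rightarrow> real mat" where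
  "nystrom k X Z = kmat k X Z * inv_mat (kmat k Z Z) * kmat k Z X"

definition frobenius_norm :: "real mat \<Rightarrow> real" where
  "frobenius_norm A = sqrt (\<Sum>i<dim_row A. \<Sum>j<dim_col A. (A $$ (i, j))\<^sup>2)"

end

(*
  K_X - Q_X is the Gram matrix of the residual kernel k - Q, where
  Q(x, y) = k(x, Z) K_Z^-1 k(Z, y); the residual kernel is positive definite (a Schur
  complement), so the Frobenius norm of its Gram matrix is at most its trace. The diagonal
  residual vanishes on Z. For any other sample x, OIPS provides z in Z with k(x, z) >= rho,
  while distinct points of Z satisfy k(z_a, z_b) < rho. With v = k(Z, x), Cauchy-Schwarz for
  the form of K_Z gives Q(x, x) = v^T K_Z^-1 v >= |v|^4 / v^T K_Z v, and
  v^T K_Z v <= (1 + (M - 1) rho) |v|^2, |v|^2 >= rho^2; hence Q(x, x) >= rho^2 / (1 + (M - 1) rho).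
*)
theory Submission
  imports Defs
begin

definition gram_form ::
    "('a \<Rightarrow> 'a \<Rightarrow> real) \<Rightarrow> 'a list \<Rightarrow> (nat \<Rightarrow> real) \<Rightarrow> 'a list \<Rightarrow> (nat \<Rightarrow> real) \<Rightarrow> real" where
  "gram_form k xs c ys e = (\<Sum>i<length xs. \<Sum>j<length ys. c i * e j * k (xs ! i) (ys ! j))"

lemma pd_kernel_sym: "pd_kernel k \<Longrightarrow> k x y = k y x"
  unfolding pd_kernel_def by blast

lemma pd_kernel_gram_form_nonneg: "pd_kernel k \<Longrightarrow> 0 \<le> gram_form k xs c xs c"
  unfolding pd_kernel_def gram_form_def by blast

lemma pd_kernelI:
  assumes "\<And>x y. k x y = k y x" and "\<And>xs c. 0 \<le> gram_form k xs c xs c"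
  shows "pd_kernel k"
  using assms unfolding pd_kernel_def gram_form_def by blast

lemma gram_form_commute:
  assumes "\<And>x y. k x y = k y x"
  shows "gram_form k xs c ys e = gram_form k ys e xs c"
  unfolding gram_form_def by (subst sum.swap) (simp add: assms mult_ac)

lemma nonneg_binary_form_discriminant:
  fixes a b c :: real
  assumes nonneg: "\<And>x y. 0 \<le> a * x\<^sup>2 + 2 * b * x * y + c * y\<^sup>2"
  shows "b\<^sup>2 \<le> a * c"
proof -
  have "0 \<le> c * (a * c - b\<^sup>2)" using nonneg[of c "- b"] by (simp add: power2_eq_square algebra_simps)
  moreover have "0 \<le> a * (a * c - b\<^sup>2)" using nonneg[of b "- a"] by (simp add: power2_eq_square algebra_simps)
  moreover have "0 \<le> a" "0 \<le> c" using nonneg[of 1 0] nonneg[of 0 1] by simp_all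
  moreover have "a = 0 \<Longrightarrow> c = 0 \<Longrightarrow> b\<^sup>2 \<le> 0" using nonneg[of 1 "- b"] by (auto simp: mult_le_0_iff)
  ultimately show ?thesis by (smt (verit) zero_le_mult_iff)
qed

lemma pd_kernel_cauchy_schwarz:
  assumes "pd_kernel k"
  shows "(gram_form k xs c xs e)\<^sup>2 \<le> gram_form k xs c xs c * gram_form k xs e xs e"
proof (rule nonneg_binary_form_discriminant)
  fix x y :: real
  have "0 \<le> gram_form k xs (\<lambda>i. x * c i + y * e i) xs (\<lambda>i. x * c i + y * e i)"
    by (rule pd_kernel_gram_form_nonneg[OF assms])
  also have "\<dots> = gram_form k xs c xs c * x\<^sup>2 + x * y * (gram_form k xs c xs e + gram_form k xs e xs c)
      + gram_form k xs e xs e * y\<^sup>2"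
    by (simp add: gram_form_def power2_eq_square algebra_simps sum.distrib sum_distrib_left)
  also have "\<dots> = gram_form k xs c xs c * x\<^sup>2 + 2 * gram_form k xs c xs e * x * y
      + gram_form k xs e xs e * y\<^sup>2"
    using gram_form_commute[where k=k, OF pd_kernel_sym[OF assms], of xs e xs c] by (simp add: algebra_simps)
  finally show "0 \<le> gram_form k xs c xs c * x\<^sup>2 + 2 * gram_form k xs c xs e * x * y
      + gram_form k xs e xs e * y\<^sup>2" .
qed

lemma pd_kernel_diag_nonneg: "pd_kernel k \<Longrightarrow> 0 \<le> k x x"
  using pd_kernel_gram_form_nonneg[of k "[x]" "\<lambda>_. 1"] by (simp add: gram_form_def)

lemma pd_kernel_sq_le:
  assumes "pd_kernel k"
  shows "(k x y)\<^sup>2 \<le> k x x * k y y"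
  using pd_kernel_cauchy_schwarz[OF assms, of "[x, y]" "\<lambda>i. if i = 0 then 1 else 0" "\<lambda>i. if i = 1 then 1 else 0"]
  by (simp add: gram_form_def numeral_2_eq_2)

lemma pd_kernel_frobenius_le_trace:
  assumes "pd_kernel k"
  shows "sqrt (\<Sum>i<length xs. \<Sum>j<length xs. (k (xs ! i) (xs ! j))\<^sup>2) \<le> (\<Sum>i<length xs. k (xs ! i) (xs ! i))"
proof -
  let ?n = "length xs" and ?d = "\<lambda>i. k (xs ! i) (xs ! i)"
  have "(\<Sum>i<?n. \<Sum>j<?n. (k (xs ! i) (xs ! j))\<^sup>2) \<le> (\<Sum>i<?n. \<Sum>j<?n. ?d i * ?d j)"
    by (intro sum_mono pd_kernel_sq_le[OF assms])
  also have "\<dots> = (\<Sum>i<?n. ?d i)\<^sup>2"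
    by (simp add: power2_eq_square sum_product)
  finally have "sqrt (\<Sum>i<?n. \<Sum>j<?n. (k (xs ! i) (xs ! j))\<^sup>2) \<le> \<bar>\<Sum>i<?n. ?d i\<bar>"
    using real_sqrt_le_mono by fastforce
  also have "\<dots> = (\<Sum>i<?n. ?d i)"
    by (simp add: sum_nonneg pd_kernel_diag_nonneg[OF assms])
  finally show ?thesis .
qed

lemma gram_form_le_unit_diagonal:
  assumes diag: "\<And>a. a < length zs \<Longrightarrow> k (zs ! a) (zs ! a) = 1"
    and off_diag: "\<And>a b. a < length zs \<Longrightarrow> b < length zs \<Longrightarrow> a \<noteq> b \<Longrightarrow> k (zs ! a) (zs ! b) \<le> \<rho>"
    and "0 \<le> \<rho>" and v_nonneg: "\<And>a. a < length zs \<Longrightarrow> 0 \<le> v a"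
  shows "gram_form k zs v zs v \<le> (1 + (real (length zs) - 1) * \<rho>) * (\<Sum>a<length zs. (v a)\<^sup>2)"
proof -
  let ?M = "length zs" and ?nv = "\<Sum>a<length zs. (v a)\<^sup>2"
  have entry: "v a * v b * k (zs ! a) (zs ! b) \<le> (if a = b then (1 - \<rho>) * (v a)\<^sup>2 else 0) + \<rho> * (v a * v b)"
    if "a < ?M" "b < ?M" for a b
  proof (cases "a = b")
    case False
    then show ?thesis
      using mult_left_mono[OF off_diag[OF that False], of "v a * v b"] v_nonneg that
      by (simp add: mult.commute)
  qed (simp add: diag that power2_eq_square algebra_simps)
  have "gram_form k zs v zs v \<le> (\<Sum>a<?M. \<Sum>b<?M. (if a = b then (1 - \<rho>) * (v a)\<^sup>2 else 0) + \<rho> * (v a * v b))"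
    unfolding gram_form_def by (intro sum_mono entry) auto
  also have "\<dots> = (1 - \<rho>) * ?nv + \<rho> * (\<Sum>a<?M. v a)\<^sup>2"
    unfolding power2_eq_square sum_product by (simp add: sum.distrib sum_distrib_left)
  also have "\<dots> \<le> (1 - \<rho>) * ?nv + \<rho> * (?nv * real ?M)"
    using sum_squared_le_sum_of_squares[of v "{..<?M}"] \<open>0 \<le> \<rho>\<close> by (simp add: mult_left_mono)
  also have "\<dots> = (1 + (real ?M - 1) * \<rho>) * ?nv"
    by (simp add: algebra_simps)
  finally show ?thesis .
qed

lemma sum_lessThan_add:
  fixes f :: "nat \<Rightarrow> 'a :: comm_monoid_add"
  shows "(\<Sum>i<m + n. f i) = (\<Sum>i<m. f i) + (\<Sum>i<n. f (m + i))"
  by (induction n) (simp_all add: add_ac)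

lemma gram_form_append_minus:
  fixes k :: "'a \<Rightarrow> 'a \<Rightarrow> real" and xs ys :: "'a list" and c e :: "nat \<Rightarrow> real"
  assumes "\<And>x y. k x y = k y x"
  defines "d \<equiv> \<lambda>i. if i < length xs then c i else - e (i - length xs)"
  shows "gram_form k (xs @ ys) d (xs @ ys) d =
    gram_form k xs c xs c - 2 * gram_form k ys e xs c + gram_form k ys e ys e"
proof -
  have "gram_form k (xs @ ys) d (xs @ ys) d =
      gram_form k xs c xs c - gram_form k xs c ys e - gram_form k ys e xs c + gram_form k ys e ys e"
    unfolding gram_form_def d_def
    by (simp add: sum_lessThan_add nth_append sum.distrib sum_subtractf sum_negf)
  then show ?thesis
    using gram_form_commute[of k xs c ys e] assms(1) by simp
qed

definition nystrom_kernel :: "('a \<Rightarrow> 'a \<Rightarrow> real) \<Rightarrow> 'a list \<Rightarrow> (nat \<Rightarrow> nat \<Rightarrow> real) \<Rightarrow> 'a \<Rightarrow> 'a \<Rightarrow> real" where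
  "nystrom_kernel k Z G x y = (\<Sum>a<length Z. \<Sum>b<length Z. k x (Z ! a) * G a b * k (Z ! b) y)"

locale gram_inverse =
  fixes k :: "'a \<Rightarrow> 'a \<Rightarrow> real" and Z :: "'a list" and G :: "nat \<Rightarrow> nat \<Rightarrow> real"
  assumes pd: "pd_kernel k"
    and right_inverse: "\<And>a c. a < length Z \<Longrightarrow> c < length Z \<Longrightarrow>
      (\<Sum>b<length Z. k (Z ! a) (Z ! b) * G b c) = (if a = c then 1 else 0)"
begin

lemma k_sym: "k x y = k y x"
  using pd by (rule pd_kernel_sym)

lemma right_inverse_apply:
  assumes "a < length Z"
  shows "(\<Sum>b<length Z. k (Z ! a) (Z ! b) * (\<Sum>c<length Z. G b c * v c)) = v a"
proof -
  have "(\<Sum>b<length Z. k (Z ! a) (Z ! b) * (\<Sum>c<length Z. G b c * v c))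
      = (\<Sum>b<length Z. \<Sum>c<length Z. k (Z ! a) (Z ! b) * G b c * v c)"
    by (simp add: sum_distrib_left mult.assoc)
  also have "\<dots> = (\<Sum>c<length Z. (\<Sum>b<length Z. k (Z ! a) (Z ! b) * G b c) * v c)"
    by (subst sum.swap) (simp add: sum_distrib_right)
  also have "\<dots> = v a"
    using assms by (simp add: right_inverse if_distrib[of "\<lambda>x. x * _"] cong: if_cong)
  finally show ?thesis .
qed

lemma G_sym:
  assumes "a < length Z" "b < length Z"
  shows "G a b = G b a"
proof -
  let ?M = "length Z"
  have "G b a = (\<Sum>c<?M. G c a * (\<Sum>d<?M. k (Z ! c) (Z ! d) * G d b))"
    using assms by (simp add: right_inverse if_distrib[of "\<lambda>x. _ * x"] cong: if_cong)
  also have "\<dots> = (\<Sum>c<?M. \<Sum>d<?M. G c a * k (Z ! c) (Z ! d) * G d b)"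
    by (simp add: sum_distrib_left mult.assoc)
  also have "\<dots> = (\<Sum>d<?M. \<Sum>c<?M. G c a * k (Z ! c) (Z ! d) * G d b)"
    by (rule sum.swap)
  also have "\<dots> = (\<Sum>d<?M. (\<Sum>c<?M. k (Z ! d) (Z ! c) * G c a) * G d b)"
    by (simp add: sum_distrib_left sum_distrib_right k_sym[of "Z ! c" "Z ! d" for c d] mult_ac)
  also have "\<dots> = G a b"
    using assms by (simp add: right_inverse if_distrib[of "\<lambda>x. x * _"] cong: if_cong)
  finally show ?thesis ..
qed

lemma nystrom_kernel_reproduces:
  assumes "z \<in> set Z"
  shows "nystrom_kernel k Z G z y = k z y"
proof -
  obtain c where c: "c < length Z" "z = Z ! c"
    using assms by (auto simp: in_set_conv_nth)
  have "nystrom_kernel k Z G z y = (\<Sum>b<length Z. (\<Sum>a<length Z. k (Z ! c) (Z ! a) * G a b) * k (Z ! b) y)"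
    unfolding nystrom_kernel_def c(2) by (subst sum.swap) (simp add: sum_distrib_right)
  also have "\<dots> = k z y"
    using c by (simp add: right_inverse if_distrib[of "\<lambda>x. x * _"] cong: if_cong)
  finally show ?thesis .
qed

lemma nystrom_kernel_sym: "nystrom_kernel k Z G x y = nystrom_kernel k Z G y x"
proof -
  have "nystrom_kernel k Z G y x = (\<Sum>b<length Z. \<Sum>a<length Z. k y (Z ! a) * G a b * k (Z ! b) x)"
    unfolding nystrom_kernel_def by (rule sum.swap)
  also have "\<dots> = nystrom_kernel k Z G x y"
    unfolding nystrom_kernel_def
    by (intro sum.cong refl) (simp add: G_sym k_sym[of y] k_sym[of _ x] mult_ac)
  finally show ?thesis ..
qed

lemma gram_form_inverse_left:
  "gram_form k Z (\<lambda>a. \<Sum>b<length Z. G a b * v b) Z e = (\<Sum>a<length Z. e a * v a)"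
proof -
  have "gram_form k Z (\<lambda>a. \<Sum>b<length Z. G a b * v b) Z e
      = (\<Sum>b<length Z. e b * (\<Sum>a<length Z. k (Z ! b) (Z ! a) * (\<Sum>c<length Z. G a c * v c)))"
    unfolding gram_form_def
    by (subst sum.swap) (simp add: sum_distrib_left k_sym[of "Z ! a" "Z ! b" for a b] mult_ac)
  also have "\<dots> = (\<Sum>a<length Z. e a * v a)"
    by (simp add: right_inverse_apply)
  finally show ?thesis .
qed

lemma nystrom_kernel_eq_sum:
  "nystrom_kernel k Z G x y = (\<Sum>a<length Z. k (Z ! a) x * (\<Sum>b<length Z. G a b * k (Z ! b) y))"
  unfolding nystrom_kernel_def by (simp add: sum_distrib_left k_sym[of x] mult_ac)

lemma nystrom_residual_pd: "pd_kernel (\<lambda>x y. k x y - nystrom_kernel k Z G x y)"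
proof (rule pd_kernelI)
  show "k x y - nystrom_kernel k Z G x y = k y x - nystrom_kernel k Z G y x" for x y
    by (simp add: k_sym[of x] nystrom_kernel_sym[of x])
next
  fix xs :: "'a list" and c :: "nat \<Rightarrow> real"
  define u where "u a = (\<Sum>j<length xs. c j * k (Z ! a) (xs ! j))" for a
  define w where "w = (\<lambda>a. \<Sum>b<length Z. G a b * u b)"
  let ?h = "\<lambda>a y. \<Sum>b<length Z. G a b * k (Z ! b) y"
  have w_eq: "w a = (\<Sum>j<length xs. c j * ?h a (xs ! j))" for a
  proof -
    have "w a = (\<Sum>b<length Z. \<Sum>j<length xs. c j * (G a b * k (Z ! b) (xs ! j)))"
      unfolding w_def u_def by (simp add: sum_distrib_left mult_ac)
    also have "\<dots> = (\<Sum>j<length xs. c j * ?h a (xs ! j))"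
      by (subst sum.swap) (simp add: sum_distrib_left)
    finally show ?thesis .
  qed
  have "(\<Sum>a<length Z. u a * w a) =
      (\<Sum>a<length Z. \<Sum>i<length xs. \<Sum>j<length xs. c i * c j * (k (Z ! a) (xs ! i) * ?h a (xs ! j)))"
    unfolding u_def w_eq sum_product by (simp add: mult_ac)
  also have "\<dots> = (\<Sum>i<length xs. \<Sum>a<length Z. \<Sum>j<length xs. c i * c j * (k (Z ! a) (xs ! i) * ?h a (xs ! j)))"
    by (rule sum.swap)
  also have "\<dots> = (\<Sum>i<length xs. \<Sum>j<length xs. \<Sum>a<length Z. c i * c j * (k (Z ! a) (xs ! i) * ?h a (xs ! j)))"
    by (rule sum.cong[OF refl], rule sum.swap)
  also have "\<dots> = gram_form (nystrom_kernel k Z G) xs c xs c"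
    by (simp add: gram_form_def nystrom_kernel_eq_sum sum_distrib_left)
  finally have nystrom_form: "gram_form (nystrom_kernel k Z G) xs c xs c = (\<Sum>a<length Z. u a * w a)" ..
  have cross: "gram_form k Z w xs c = (\<Sum>a<length Z. u a * w a)"
    by (simp add: gram_form_def u_def sum_distrib_left mult_ac)
  have "gram_form k Z w Z w = (\<Sum>a<length Z. u a * w a)"
    using gram_form_inverse_left[of u w, folded w_def] by (simp add: mult.commute)
  \<comment> \<open>Positivity of k at the vector \<open>(c, - K\<^sub>Z\<^sup>-\<^sup>1 K\<^sub>Z\<^sub>X c)\<close> on \<open>xs @ Z\<close>.\<close>
  moreover have "0 \<le> gram_form k xs c xs c - 2 * gram_form k Z w xs c + gram_form k Z w Z w"
    by (subst gram_form_append_minus[OF k_sym, symmetric]) (rule pd_kernel_gram_form_nonneg[OF pd])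
  ultimately have "gram_form (nystrom_kernel k Z G) xs c xs c \<le> gram_form k xs c xs c"
    using nystrom_form cross by simp
  then show "0 \<le> gram_form (\<lambda>x y. k x y - nystrom_kernel k Z G x y) xs c xs c"
    by (simp add: gram_form_def right_diff_distrib sum_subtractf)
qed

lemma nystrom_kernel_diag_lower_bound:
  assumes diag: "\<And>x. k x x = 1" and nonneg: "\<And>x y. 0 \<le> k x y" and "0 \<le> \<rho>"
    and separated: "\<And>a b. a < length Z \<Longrightarrow> b < length Z \<Longrightarrow> a \<noteq> b \<Longrightarrow> k (Z ! a) (Z ! b) \<le> \<rho>"
    and "z \<in> set Z" and close: "\<rho> \<le> k x z"
  shows "\<rho>\<^sup>2 / (1 + (real (length Z) - 1) * \<rho>) \<le> nystrom_kernel k Z G x x"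
proof -
  define v where "v = (\<lambda>a. k (Z ! a) x)"
  define w where "w = (\<lambda>a. \<Sum>b<length Z. G a b * v b)"
  define nv where "nv = (\<Sum>a<length Z. (v a)\<^sup>2)"
  define L where "L = 1 + (real (length Z) - 1) * \<rho>"
  have Q_eq: "nystrom_kernel k Z G x x = gram_form k Z w Z w"
    using gram_form_inverse_left[of v w, folded w_def]
    by (simp add: nystrom_kernel_eq_sum v_def w_def mult.commute)
  have Q_nonneg: "0 \<le> nystrom_kernel k Z G x x"
    unfolding Q_eq by (rule pd_kernel_gram_form_nonneg[OF pd])
  have "nv\<^sup>2 = (gram_form k Z w Z v)\<^sup>2"
    using gram_form_inverse_left[of v v, folded w_def] by (simp add: nv_def power2_eq_square)
  also have "\<dots> \<le> nystrom_kernel k Z G x x * gram_form k Z v Z v"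
    unfolding Q_eq by (rule pd_kernel_cauchy_schwarz[OF pd])
  also have "\<dots> \<le> nystrom_kernel k Z G x x * (L * nv)"
    unfolding L_def nv_def
    by (intro mult_left_mono gram_form_le_unit_diagonal Q_nonneg) (auto simp: diag separated \<open>0 \<le> \<rho>\<close> v_def nonneg)
  finally have nv_le: "nv\<^sup>2 \<le> nystrom_kernel k Z G x x * L * nv"
    by (simp add: mult.assoc)
  obtain a where a: "a < length Z" "z = Z ! a"
    using \<open>z \<in> set Z\<close> by (auto simp: in_set_conv_nth)
  have "\<rho>\<^sup>2 \<le> (v a)\<^sup>2"
    using close \<open>0 \<le> \<rho>\<close> a by (simp add: v_def k_sym[of x] power_mono)
  also have "\<dots> \<le> nv"
    unfolding nv_def using a(1) by (intro member_le_sum) auto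
  finally have rho_le: "\<rho>\<^sup>2 \<le> nv" .
  have "\<rho>\<^sup>2 \<le> nystrom_kernel k Z G x x * L"
  proof (cases "nv = 0")
    case True
    then show ?thesis
      using rho_le Q_nonneg \<open>0 \<le> \<rho>\<close> by (simp add: L_def)
  next
    case False
    then have "0 < nv"
      using rho_le zero_le_power2[of \<rho>] by linarith
    then have "nv \<le> nystrom_kernel k Z G x x * L"
      using nv_le mult_right_le_imp_le[of nv nv "nystrom_kernel k Z G x x * L"]
      by (simp add: power2_eq_square)
    then show ?thesis using rho_le by linarith
  qed
  moreover have "0 < L"
    using a(1) \<open>0 \<le> \<rho>\<close> by (simp add: L_def add_pos_nonneg)
  ultimately show ?thesis
    by (simp add: L_def pos_divide_le_eq)
qed

end

lemma oips_step_eq: "oips_step k \<rho> Z x = (if \<forall>z\<in>set Z. k x z < \<rho> then Z @ [x] else Z)"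
  by (cases "Z = []") (simp_all add: oips_step_def Max_less_iff)

lemma set_oips_subset: "set (oips k \<rho> xs) \<subseteq> set xs"
  by (induction xs rule: rev_induct) (auto simp: oips_def oips_step_eq)

lemma distinct_oips: "distinct xs \<Longrightarrow> distinct (oips k \<rho> xs)"
proof (induction xs rule: rev_induct)
  case (snoc x xs)
  then show ?case
    using set_oips_subset[of k \<rho> xs] by (auto simp: oips_def oips_step_eq)
qed (simp add: oips_def)

lemma oips_separated:
  assumes "\<And>x y. k x y = k y x"
  shows "z \<in> set (oips k \<rho> xs) \<Longrightarrow> z' \<in> set (oips k \<rho> xs) \<Longrightarrow> z \<noteq> z' \<Longrightarrow> k z z' < \<rho>"
proof (induction xs arbitrary: z z' rule: rev_induct)
  case (snoc x xs)
  then show ?case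
    using assms by (auto simp: oips_def oips_step_eq split: if_splits)
qed (simp add: oips_def)

lemma oips_covers:
  "y \<in> set xs \<Longrightarrow> y \<notin> set (oips k \<rho> xs) \<Longrightarrow> \<exists>z\<in>set (oips k \<rho> xs). \<rho> \<le> k y z"
proof (induction xs rule: rev_induct)
  case (snoc x xs)
  then show ?case
    by (auto simp: oips_def oips_step_eq not_less split: if_splits)
qed simp

lemma inv_mat_right_inverse:
  assumes "invertible_mat A" and "A \<in> carrier_mat n n"
  shows "inv_mat A \<in> carrier_mat n n" and "A * inv_mat A = 1\<^sub>m n"
proof -
  have "\<exists>B. inverts_mat A B \<and> inverts_mat B A"
    using assms(1) unfolding invertible_mat_def by blast
  then have "inverts_mat A (inv_mat A) \<and> inverts_mat (inv_mat A) A"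
    unfolding inv_mat_def by (rule someI_ex)
  then have AB: "A * inv_mat A = 1\<^sub>m n" and BA: "inv_mat A * A = 1\<^sub>m (dim_row (inv_mat A))"
    using assms(2) unfolding inverts_mat_def by auto
  have "dim_col (inv_mat A) = n"
    using arg_cong[OF AB, of dim_col] by simp
  moreover have "dim_row (inv_mat A) = n"
    using arg_cong[OF BA, of dim_col] assms(2) by simp
  ultimately show "inv_mat A \<in> carrier_mat n n" by auto
  show "A * inv_mat A = 1\<^sub>m n" by (fact AB)
qed

definition inv_gram :: "('a \<Rightarrow> 'a \<Rightarrow> real) \<Rightarrow> 'a list \<Rightarrow> nat \<Rightarrow> nat \<Rightarrow> real" where
  "inv_gram k Z a b = inv_mat (kmat k Z Z) $$ (a, b)"

lemma kmat_carrier: "kmat k A B \<in> carrier_mat (length A) (length B)"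
  by (simp add: kmat_def)

lemma gram_inverse_inv_gram:
  assumes "pd_kernel k" and "invertible_mat (kmat k Z Z)"
  shows "gram_inverse k Z (inv_gram k Z)"
proof
  fix a c assume "a < length Z" "c < length Z"
  then have "(kmat k Z Z * inv_mat (kmat k Z Z)) $$ (a, c) = (if a = c then 1 else 0)"
    using inv_mat_right_inverse(2)[OF assms(2) kmat_carrier] by simp
  moreover have "(kmat k Z Z * inv_mat (kmat k Z Z)) $$ (a, c) =
      (\<Sum>b<length Z. k (Z ! a) (Z ! b) * inv_gram k Z b c)"
    using \<open>a < length Z\<close> \<open>c < length Z\<close> inv_mat_right_inverse(1)[OF assms(2) kmat_carrier]
    by (simp add: kmat_def inv_gram_def scalar_prod_def atLeast0LessThan)
  ultimately show "(\<Sum>b<length Z. k (Z ! a) (Z ! b) * inv_gram k Z b c) = (if a = c then 1 else 0)"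
    by simp
qed (fact assms(1))

lemma index_nystrom:
  assumes "invertible_mat (kmat k Z Z)" and "i < length X" "j < length X"
  shows "nystrom k X Z $$ (i, j) = nystrom_kernel k Z (inv_gram k Z) (X ! i) (X ! j)"
proof -
  let ?G = "inv_gram k Z"
  have "nystrom k X Z $$ (i, j) =
      (\<Sum>b<length Z. (\<Sum>a<length Z. k (X ! i) (Z ! a) * ?G a b) * k (Z ! b) (X ! j))"
    using assms inv_mat_right_inverse(1)[OF assms(1) kmat_carrier]
    by (simp add: nystrom_def kmat_def inv_gram_def scalar_prod_def atLeast0LessThan)
  also have "\<dots> = nystrom_kernel k Z ?G (X ! i) (X ! j)"
    unfolding nystrom_kernel_def by (subst sum.swap) (simp add: sum_distrib_right)
  finally show ?thesis .
qed

lemma oips_residual_diag_le: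
  fixes k :: "'a \<Rightarrow> 'a \<Rightarrow> real"
  assumes pd: "pd_kernel k" and diag: "\<And>x. k x x = 1" and nonneg: "\<And>x y. 0 \<le> k x y"
    and "0 \<le> \<rho>" and inv: "invertible_mat (kmat k Z Z)"
    and "distinct xs" and Z: "Z = oips k \<rho> xs" and "x \<in> set xs" "x \<notin> set Z"
  shows "k x x - nystrom_kernel k Z (inv_gram k Z) x x
    \<le> 1 - \<rho>\<^sup>2 / (1 + real (length Z) * (real (length Z) - 1) * \<rho>)"
proof -
  interpret gram_inverse k Z "inv_gram k Z"
    using gram_inverse_inv_gram[OF pd inv] .
  obtain z where z: "z \<in> set Z" "\<rho> \<le> k x z"
    using oips_covers[of x xs k \<rho>] \<open>x \<in> set xs\<close> \<open>x \<notin> set Z\<close> unfolding Z by blast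
  have separated: "k (Z ! a) (Z ! b) \<le> \<rho>" if "a < length Z" "b < length Z" "a \<noteq> b" for a b
  proof -
    have "Z ! a \<noteq> Z ! b"
      using that distinct_oips[OF \<open>distinct xs\<close>, of k \<rho>] Z by (simp add: nth_eq_iff_index_eq)
    then show ?thesis
      using that oips_separated[where k=k, OF k_sym, of "Z ! a" \<rho> xs "Z ! b"] Z
      by (simp add: less_imp_le)
  qed
  have M: "1 \<le> real (length Z)"
    using z(1) by (cases Z) auto
  have "0 \<le> (real (length Z) - 1) * \<rho>"
    using M \<open>0 \<le> \<rho>\<close> by simp
  then have "(real (length Z) - 1) * \<rho> * 1 \<le> (real (length Z) - 1) * \<rho> * real (length Z)"
    by (rule mult_left_mono[OF M])
  then have "\<rho>\<^sup>2 / (1 + real (length Z) * (real (length Z) - 1) * \<rho>)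
      \<le> \<rho>\<^sup>2 / (1 + (real (length Z) - 1) * \<rho>)"
    using \<open>0 \<le> (real (length Z) - 1) * \<rho>\<close> by (intro frac_le) (simp_all add: mult_ac)
  also have "\<dots> \<le> nystrom_kernel k Z (inv_gram k Z) x x"
    by (rule nystrom_kernel_diag_lower_bound[OF diag nonneg \<open>0 \<le> \<rho>\<close> separated z])
  finally show ?thesis
    using diag by simp
qed

lemma frobenius_norm_nystrom_error:
  assumes "invertible_mat (kmat k Z Z)"
  shows "frobenius_norm (kmat k X X - nystrom k X Z) =
    sqrt (\<Sum>i<length X. \<Sum>j<length X.
      (k (X ! i) (X ! j) - nystrom_kernel k Z (inv_gram k Z) (X ! i) (X ! j))\<^sup>2)"
  unfolding frobenius_norm_def
  by (simp add: kmat_def nystrom_def index_nystrom[OF assms, symmetric])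

theorem theorem2:
  fixes k :: "real ^ 'd \<Rightarrow> real ^ 'd \<Rightarrow> real"
    and \<rho> :: real
    and xs :: "(real ^ 'd) list"
  assumes "pd_kernel k"
    and "translation_invariant k"
    and "\<And>x. k x x = 1"
    and "\<And>x y. 0 \<le> k x y \<and> k x y \<le> 1"
    and "0 < \<rho>" and "\<rho> < 1"
    and "distinct xs"
    and "invertible_mat (kmat k (oips k \<rho> xs) (oips k \<rho> xs))"
  shows "frobenius_norm (kmat k xs xs - nystrom k xs (oips k \<rho> xs))
           \<le> (real (length xs) - real (length (oips k \<rho> xs))) *
              (1 - \<rho>\<^sup>2 / (1 + real (length (oips k \<rho> xs)) *
                             (real (length (oips k \<rho> xs)) - 1) * \<rho>))"
proof -
  define Z where "Z = oips k \<rho> xs"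
  define C where "C = 1 - \<rho>\<^sup>2 / (1 + real (length Z) * (real (length Z) - 1) * \<rho>)"
  define r where "r = (\<lambda>x. if x \<in> set Z then 0 else C)"
  interpret gram_inverse k Z "inv_gram k Z"
    using gram_inverse_inv_gram assms(1,8) unfolding Z_def .
  have diag_le: "k x x - nystrom_kernel k Z (inv_gram k Z) x x \<le> r x" if "x \<in> set xs" for x
  proof (cases "x \<in> set Z")
    case True
    then show ?thesis by (simp add: r_def nystrom_kernel_reproduces)
  next
    case False
    then show ?thesis
      using oips_residual_diag_le[of k \<rho> Z xs x] assms that by (simp add: r_def C_def Z_def less_imp_le)
  qed
  have "set Z \<subseteq> set xs"
    unfolding Z_def by (rule set_oips_subset)
  then have card_diff: "real (card (set xs - set Z)) = real (length xs) - real (length Z)"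
    using card_mono[of "set xs" "set Z"] distinct_oips[OF assms(7)] assms(7)
    by (simp add: Z_def card_Diff_subset distinct_card of_nat_diff)
  have "frobenius_norm (kmat k xs xs - nystrom k xs Z) \<le>
      (\<Sum>i<length xs. k (xs ! i) (xs ! i) - nystrom_kernel k Z (inv_gram k Z) (xs ! i) (xs ! i))"
    unfolding frobenius_norm_nystrom_error[OF assms(8)[folded Z_def]]
    by (rule pd_kernel_frobenius_le_trace[OF nystrom_residual_pd])
  also have "\<dots> \<le> (\<Sum>i<length xs. r (xs ! i))"
    by (intro sum_mono diag_le) simp
  also have "\<dots> = sum r (set xs)"
    using assms(7) by (simp add: sum.distinct_set_conv_list sum_list_sum_nth atLeast0LessThan)
  also have "\<dots> = (real (length xs) - real (length Z)) * C"
    by (simp add: r_def sum.If_cases Diff_eq flip: card_diff)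
  finally show ?thesis
    unfolding C_def Z_def .
qed

end
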